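(* Let $T>0$, $\mu>0$, and consider a partition of $[0,T]$ with mesh-size $h$ satisfying $$h\le\frac{\pi^2}{\sqrt2\,(2+\sqrt\mu\,T)\,\mu\,T}.$$ Then for all $u_h\in V^h_{0,*}$, $$\frac{2\pi^2}{(2+\sqrt\mu T)^2(\pi^2+4\mu T^2)}\,|u_h|_{H^1(0,T)}\le\sup_{0\ne v_h\in V^h_{0,*}}\frac{a(u_h,\overline{\mathcal H}_Tv_h)}{|v_h|_{H^1(0,T)}}.$$
   Context: $H^1_{0,*}(0,T)=\{u\in H^1(0,T):u(0)=0\}$, $H^1_{*,0}(0,T)=\{v\in H^1(0,T):v(T)=0\}$, with the norm $|u|_{H^1(0,T)}=\|\partial_tu\|_{L^2(0,T)}$. The bilinear form is $a(u,v):=-\langle\partial_tu,\partial_tv\rangle_{L^2(0,T)}+\mu\langle u,v\rangle_{L^2(0,T)}$ for $u\in H^1_{0,*}$, $v\in H^1_{*,0}$, and $(\overline{\mathcal H}_Tv)(t):=v(T)-v(t)$. For a partition $0=\eta_0<\dots<\eta_{l+1}=T$ with $h=\max_i(\eta_{i+1}-\eta_i)$, $S^2_h$ is the space of $C^1([0,T])$ functions that are polynomials of degree $\le2$ on each $[\eta_i,\eta_{i+1}]$, and $V^h_{0,*}:=\{v_h\in S^2_h:v_h(0)=0\}$. *)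

theory Defs
  imports "HOL-Analysis.Analysis"
begin

definition is_partition :: "real \<Rightarrow> nat \<Rightarrow> (nat \<Rightarrow> real) \<Rightarrow> bool" where
  "is_partition T l eta \<longleftrightarrow> eta 0 = 0 \<and> eta (Suc l) = T \<and> (\<forall>i\<le>l. eta i < eta (Suc i))"

definition mesh :: "nat \<Rightarrow> (nat \<Rightarrow> real) \<Rightarrow> real" where
  "mesh l eta = Max ((\<lambda>i. eta (Suc i) - eta i) ` {0..l})"

definition C1_on :: "real \<Rightarrow> (real \<Rightarrow> real) \<Rightarrow> bool" where
  "C1_on T v \<longleftrightarrow> (\<exists>v'. (\<forall>t\<in>{0..T}. (v has_real_derivative v' t) (at t within {0..T}))
                          \<and> continuous_on {0..T} v')"

definition S2h :: "real \<Rightarrow> nat \<Rightarrow> (nat \<Rightarrow> real) \<Rightarrow> (real \<Rightarrow> real) set" where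
  "S2h T l eta = {v. C1_on T v \<and>
     (\<forall>i\<le>l. \<exists>c0 c1 c2. \<forall>t\<in>{eta i..eta (Suc i)}. v t = c0 + c1 * t + c2 * t ^ 2)}"

definition Vh0 :: "real \<Rightarrow> nat \<Rightarrow> (nat \<Rightarrow> real) \<Rightarrow> (real \<Rightarrow> real) set" where
  "Vh0 T l eta = {v \<in> S2h T l eta. v 0 = 0}"

(* |u|_{H^1(0,T)} = || d/dt u ||_{L^2(0,T)}  (derivative taken in the interior) *)
definition H1semi :: "real \<Rightarrow> (real \<Rightarrow> real) \<Rightarrow> real" where
  "H1semi T u = sqrt (integral {0..T} (\<lambda>t. (deriv u t)\<^sup>2))"

definition bilin_a :: "real \<Rightarrow> real \<Rightarrow> (real \<Rightarrow> real) \<Rightarrow> (real \<Rightarrow> real) \<Rightarrow> real" where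
  "bilin_a T \<mu> u v = - integral {0..T} (\<lambda>t. deriv u t * deriv v t)
                      + \<mu> * integral {0..T} (\<lambda>t. u t * v t)"

definition HT :: "real \<Rightarrow> (real \<Rightarrow> real) \<Rightarrow> real \<Rightarrow> real" where
  "HT T v = (\<lambda>t. v T - v t)"

end

theory Submission
  imports Defs
begin

text \<open>Integrating the mass term by parts gives \<open>a(u, HT T w) = \<langle>f, w'\<rangle>\<close> with
  \<open>f = u' + \<mu> \<integral>\<^sub>0\<^sup>t u\<close>, so every ratio in the supremum is at most \<open>\<parallel>f\<parallel>\<close>. The discrete test function
  \<open>v = u + \<mu> \<integral>\<^sub>0\<^sup>t I\<^sub>h U\<close>, where \<open>I\<^sub>h U\<close> interpolates \<open>U = \<integral>\<^sub>0\<^sup>t u\<close> piecewise linearly, has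
  \<open>v' = f - \<mu> (U - I\<^sub>h U)\<close>. An energy argument for \<open>u\<^sup>2 + \<mu> U\<^sup>2\<close> gives
  \<open>\<parallel>u\<parallel>, \<surd>\<mu> \<parallel>U\<parallel> \<le> T \<parallel>f\<parallel> / \<surd>2\<close>, hence \<open>|u|\<^sub>H\<^sub>1 \<le> (1 + \<surd>\<mu> T / \<surd>2) \<parallel>f\<parallel>\<close>, and the
  interpolation error satisfies \<open>\<mu> \<parallel>U - I\<^sub>h U\<parallel> \<le> k \<parallel>f\<parallel>\<close> with \<open>k = \<mu> h T / \<surd>12\<close>. Thus the
  ratio for \<open>v\<close> is at least \<open>\<parallel>f\<parallel> (1 - k) / (1 + k)\<close>, and the mesh condition makes this
  dominate the claimed constant times \<open>|u|\<^sub>H\<^sub>1\<close>.\<close>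

lemma integral_eq_antiderivative_diff:
  fixes F f :: "real \<Rightarrow> real"
  assumes "a \<le> b" "\<And>x. x \<in> {a..b} \<Longrightarrow> (F has_real_derivative f x) (at x within {a..b})"
  shows "integral {a..b} f = F b - F a"
  using fundamental_theorem_of_calculus[of a b F f] assms
  by (auto simp: has_real_derivative_iff_has_vector_derivative[symmetric] intro: integral_unique)

lemma integral_square_nonneg: "0 \<le> integral S (\<lambda>t. (f t)\<^sup>2 :: real)"
  by (cases "(\<lambda>t. (f t)\<^sup>2) integrable_on S")
    (auto intro: Henstock_Kurzweil_Integration.integral_nonneg simp: not_integrable_integral)

lemma quadratic_nonneg_imp_discrim_le:
  fixes A B C :: real
  assumes "0 \<le> A" and nonneg: "\<And>x. 0 \<le> A * x\<^sup>2 - 2 * C * x + B"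
  shows "C\<^sup>2 \<le> A * B"
proof (cases "A = 0")
  case True
  have "C = 0"
  proof (rule ccontr)
    assume "C \<noteq> 0"
    then show False using nonneg[of "(B + 1) / (2 * C)"] True by simp
  qed
  with True show ?thesis by simp
next
  case False
  with \<open>0 \<le> A\<close> have "0 < A" by simp
  with nonneg[of "C / A"] show ?thesis by (simp add: power2_eq_square field_simps)
qed

definition L2_norm :: "real \<Rightarrow> real \<Rightarrow> (real \<Rightarrow> real) \<Rightarrow> real" where
  "L2_norm a b f = sqrt (integral {a..b} (\<lambda>t. (f t)\<^sup>2))"

lemma L2_norm_nonneg: "0 \<le> L2_norm a b f"
  unfolding L2_norm_def using integral_square_nonneg by simp

lemma L2_norm_power2: "(L2_norm a b f)\<^sup>2 = integral {a..b} (\<lambda>t. (f t)\<^sup>2)"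
  unfolding L2_norm_def using integral_square_nonneg by simp

lemma integral_mult_le_L2_norm:
  fixes f g :: "real \<Rightarrow> real"
  assumes f: "continuous_on {a..b} f" and g: "continuous_on {a..b} g"
  shows "\<bar>integral {a..b} (\<lambda>t. f t * g t)\<bar> \<le> L2_norm a b f * L2_norm a b g"
proof -
  have "0 \<le> integral {a..b} (\<lambda>t. (f t)\<^sup>2) * x\<^sup>2 - 2 * integral {a..b} (\<lambda>t. f t * g t) * x
            + integral {a..b} (\<lambda>t. (g t)\<^sup>2)" for x
  proof -
    have "0 \<le> integral {a..b} (\<lambda>t. (x * f t - g t)\<^sup>2)"
      by (rule integral_square_nonneg)
    also have "\<dots> = integral {a..b} (\<lambda>t. x\<^sup>2 * (f t)\<^sup>2 - 2 * x * (f t * g t) + (g t)\<^sup>2)"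
      by (simp add: power2_eq_square algebra_simps)
    also have "\<dots> = integral {a..b} (\<lambda>t. (f t)\<^sup>2) * x\<^sup>2 - 2 * integral {a..b} (\<lambda>t. f t * g t) * x
                      + integral {a..b} (\<lambda>t. (g t)\<^sup>2)"
      using f g by (simp add: integral_add integral_diff integrable_continuous_interval continuous_intros integrable_diff)
    finally show ?thesis .
  qed
  then have "(integral {a..b} (\<lambda>t. f t * g t))\<^sup>2 \<le> (L2_norm a b f)\<^sup>2 * (L2_norm a b g)\<^sup>2"
    unfolding L2_norm_power2 by (intro quadratic_nonneg_imp_discrim_le integral_square_nonneg) simp
  then show ?thesis
    using L2_norm_nonneg by (simp add: power_mult_distrib[symmetric] power2_le_iff_abs_le)
qed

lemma L2_norm_diff_le:
  fixes f g :: "real \<Rightarrow> real"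
  assumes f: "continuous_on {a..b} f" and g: "continuous_on {a..b} g"
  shows "L2_norm a b (\<lambda>t. f t - g t) \<le> L2_norm a b f + L2_norm a b g"
proof (rule power2_le_imp_le)
  have "(L2_norm a b (\<lambda>t. f t - g t))\<^sup>2
        = integral {a..b} (\<lambda>t. (f t)\<^sup>2) - 2 * integral {a..b} (\<lambda>t. f t * g t) + integral {a..b} (\<lambda>t. (g t)\<^sup>2)"
    unfolding L2_norm_power2 power2_diff
    using f g by (simp add: integral_add integral_diff integrable_continuous_interval continuous_intros integrable_diff mult.assoc)
  also have "\<dots> \<le> (L2_norm a b f)\<^sup>2 + 2 * (L2_norm a b f * L2_norm a b g) + (L2_norm a b g)\<^sup>2"
    using integral_mult_le_L2_norm[OF f g] by (simp add: L2_norm_power2)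
  finally show "(L2_norm a b (\<lambda>t. f t - g t))\<^sup>2 \<le> (L2_norm a b f + L2_norm a b g)\<^sup>2"
    by (simp add: power2_sum)
qed (simp add: L2_norm_nonneg add_nonneg_nonneg)

lemma L2_norm_cmult: "L2_norm a b (\<lambda>t. c * f t) = \<bar>c\<bar> * L2_norm a b f"
  by (simp add: L2_norm_def power_mult_distrib real_sqrt_mult)

lemma square_integral_le_L2_norm:
  fixes f :: "real \<Rightarrow> real"
  assumes "a \<le> b" "continuous_on {a..b} f"
  shows "(integral {a..b} f)\<^sup>2 \<le> (b - a) * (L2_norm a b f)\<^sup>2"
proof -
  have "\<bar>integral {a..b} (\<lambda>t. f t * 1)\<bar> \<le> L2_norm a b f * L2_norm a b (\<lambda>_. 1)"
    using assms by (intro integral_mult_le_L2_norm) auto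
  then have "(integral {a..b} f)\<^sup>2 \<le> (L2_norm a b f * sqrt (b - a))\<^sup>2"
    using assms L2_norm_nonneg by (simp add: L2_norm_def power2_le_iff_abs_le)
  then show ?thesis using assms by (simp add: power_mult_distrib mult.commute)
qed

lemma integral_abs_le_L2_norm:
  fixes f :: "real \<Rightarrow> real"
  assumes "a \<le> t" "t \<le> b" and fc: "continuous_on {a..b} f"
  shows "integral {a..t} (\<lambda>x. \<bar>f x\<bar>) \<le> sqrt ((t - a) * (L2_norm a b f)\<^sup>2)"
proof (rule real_le_rsqrt)
  have sub: "{a..t} \<subseteq> {a..b}" using assms by auto
  have "(integral {a..t} (\<lambda>x. \<bar>f x\<bar>))\<^sup>2 \<le> (t - a) * (L2_norm a t (\<lambda>x. \<bar>f x\<bar>))\<^sup>2"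
    using square_integral_le_L2_norm[of a t] assms continuous_on_subset[OF fc sub]
    by (simp add: continuous_on_rabs)
  also have "(L2_norm a t (\<lambda>x. \<bar>f x\<bar>))\<^sup>2 \<le> (L2_norm a b f)\<^sup>2"
    unfolding L2_norm_power2 using sub fc continuous_on_subset[OF fc sub]
    by (simp, intro integral_subset_le integrable_continuous_interval continuous_intros) auto
  finally show "(integral {a..t} (\<lambda>x. \<bar>f x\<bar>))\<^sup>2 \<le> (t - a) * (L2_norm a b f)\<^sup>2"
    using assms by (simp add: mult_left_mono order_trans)
qed

section \<open>Energy estimate\<close>

lemma sqrt_le_integral_abs_of_derivative:
  fixes E y g :: "real \<Rightarrow> real"
  assumes "0 \<le> t" "E 0 = 0" "\<And>x. 0 \<le> E x"
    and cont: "continuous_on {0..t} E" "continuous_on {0..t} g"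
    and deriv: "\<And>x. 0 < x \<Longrightarrow> x < t \<Longrightarrow> (E has_real_derivative 2 * y x * g x) (at x)"
    and bound: "\<And>x. \<bar>y x\<bar> \<le> sqrt (E x)"
  shows "sqrt (E t) \<le> integral {0..t} (\<lambda>x. \<bar>g x\<bar>)"
proof (rule field_le_epsilon)
  fix \<epsilon> :: real
  assume "0 < \<epsilon>"
  define G where "G = (\<lambda>r. integral {0..r} (\<lambda>x. \<bar>g x\<bar>))"
  define \<phi> where "\<phi> = (\<lambda>r. sqrt (E r + \<epsilon>\<^sup>2) - G r)"
  \<comment> \<open>Regularizing by \<open>\<epsilon>\<^sup>2\<close> keeps the square root differentiable where \<open>E\<close> vanishes.\<close>
  have "\<phi> t \<le> \<phi> 0"
  proof (rule DERIV_nonpos_imp_decreasing_open[OF \<open>0 \<le> t\<close>])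
    fix r assume r: "0 < r" "r < t"
    have pos: "0 < E r + \<epsilon>\<^sup>2" using assms(3)[of r] \<open>0 < \<epsilon>\<close> by (simp add: add_nonneg_pos)
    have "(G has_real_derivative \<bar>g r\<bar>) (at r within {0..t})"
      unfolding G_def using r cont by (intro integral_has_real_derivative continuous_intros) auto
    then have dG: "(G has_real_derivative \<bar>g r\<bar>) (at r)"
      using r by (simp add: at_within_Icc_at)
    have dE: "((\<lambda>r. E r + \<epsilon>\<^sup>2) has_real_derivative 2 * y r * g r) (at r)"
      using deriv[OF r] by (auto intro!: derivative_eq_intros)
    have "(\<phi> has_real_derivative inverse (sqrt (E r + \<epsilon>\<^sup>2)) / 2 * (2 * y r * g r) - \<bar>g r\<bar>) (at r)"
      unfolding \<phi>_def by (rule DERIV_diff[OF DERIV_chain2[OF DERIV_real_sqrt[OF pos] dE] dG])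
    moreover have "inverse (sqrt (E r + \<epsilon>\<^sup>2)) / 2 * (2 * y r * g r) - \<bar>g r\<bar> \<le> 0"
    proof -
      have "\<bar>y r\<bar> \<le> sqrt (E r + \<epsilon>\<^sup>2)" using bound[of r] by (rule order_trans) simp
      then have "\<bar>y r * g r\<bar> \<le> sqrt (E r + \<epsilon>\<^sup>2) * \<bar>g r\<bar>"
        unfolding abs_mult by (rule mult_right_mono) simp
      then show ?thesis using pos by (simp add: field_simps)
    qed
    ultimately show "\<exists>y. (\<phi> has_real_derivative y) (at r) \<and> y \<le> 0" by blast
  next
    have "continuous_on {0..t} G"
      unfolding G_def using cont
      by (intro indefinite_integral_continuous_1 integrable_continuous_interval continuous_intros)
    then show "continuous_on {0..t} \<phi>"
      unfolding \<phi>_def using cont by (intro continuous_intros)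
  qed
  then have "sqrt (E t + \<epsilon>\<^sup>2) \<le> \<epsilon> + G t"
    unfolding \<phi>_def G_def using \<open>E 0 = 0\<close> \<open>0 < \<epsilon>\<close> by simp
  moreover have "sqrt (E t) \<le> sqrt (E t + \<epsilon>\<^sup>2)" by simp
  ultimately show "sqrt (E t) \<le> G t + \<epsilon>" unfolding G_def by linarith
qed

lemma energy_estimate:
  fixes u p :: "real \<Rightarrow> real"
  assumes "0 \<le> \<mu>" and pc: "continuous_on {0..T} p"
    and du: "\<And>x. x \<in> {0..T} \<Longrightarrow> (u has_real_derivative p x) (at x within {0..T})"
    and "u 0 = 0" and t: "t \<in> {0..T}"
  shows "(u t)\<^sup>2 + \<mu> * (integral {0..t} u)\<^sup>2 \<le> t * (L2_norm 0 T (\<lambda>x. p x + \<mu> * integral {0..x} u))\<^sup>2"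
proof -
  define U where "U = (\<lambda>x. integral {0..x} u)"
  define f where "f = (\<lambda>x. p x + \<mu> * U x)"
  define E where "E = (\<lambda>x. (u x)\<^sup>2 + \<mu> * (U x)\<^sup>2)"
  have uc: "continuous_on {0..T} u" using du by (rule DERIV_continuous_on)
  have dU: "(U has_real_derivative u x) (at x within {0..T})" if "x \<in> {0..T}" for x
    unfolding U_def using uc that by (rule integral_has_real_derivative)
  have fc: "continuous_on {0..T} f"
    unfolding f_def using pc DERIV_continuous_on[OF dU] by (intro continuous_intros)
  have sub: "{0..t} \<subseteq> {0..T}" using t by auto
  have "sqrt (E t) \<le> integral {0..t} (\<lambda>x. \<bar>f x\<bar>)"
  proof (rule sqrt_le_integral_abs_of_derivative[where y = u])
    show "E 0 = 0" unfolding E_def U_def using \<open>u 0 = 0\<close> by simp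
    show "0 \<le> E x" for x unfolding E_def using \<open>0 \<le> \<mu>\<close> by simp
    show "continuous_on {0..t} E"
      unfolding E_def using continuous_on_subset[OF uc sub] continuous_on_subset[OF DERIV_continuous_on[OF dU] sub]
      by (intro continuous_intros)
    show "continuous_on {0..t} f" using fc sub by (rule continuous_on_subset)
    show "(E has_real_derivative 2 * u x * f x) (at x)" if "0 < x" "x < t" for x
    proof -
      have x: "x \<in> {0..T}" "0 < x" "x < T" using that t by auto
      have "(u has_real_derivative p x) (at x)" "(U has_real_derivative u x) (at x)"
        using du[OF x(1)] dU[OF x(1)] x by (simp_all add: at_within_Icc_at)
      then show ?thesis
        unfolding E_def f_def by (auto intro!: derivative_eq_intros simp: algebra_simps)
    qed
    show "\<bar>u x\<bar> \<le> sqrt (E x)" for x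
      unfolding E_def using \<open>0 \<le> \<mu>\<close> by (intro real_le_rsqrt) simp
  qed (use t in simp)
  also have "\<dots> \<le> sqrt ((t - 0) * (L2_norm 0 T f)\<^sup>2)"
    using t fc by (intro integral_abs_le_L2_norm) auto
  finally show ?thesis
    unfolding E_def f_def U_def using t \<open>0 \<le> \<mu>\<close> by simp
qed

section \<open>Interpolation error on a cell\<close>

lemma square_primitive_le_of_zero_mean:
  fixes g :: "real \<Rightarrow> real"
  assumes t: "a \<le> t" "t \<le> b" and "a < b" and gc: "continuous_on {a..b} g"
    and mean: "integral {a..b} g = 0"
  shows "(integral {a..t} g)\<^sup>2 \<le> (L2_norm a b g)\<^sup>2 / (b - a) * ((t - a) * (b - t))"
proof -
  \<comment> \<open>Cauchy-Schwarz on \<open>[a, t]\<close> and, as the mean vanishes, on \<open>[t, b]\<close>; then weight by \<open>b - t\<close> and \<open>t - a\<close>.\<close>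
  have split: "integral {a..t} h + integral {t..b} h = integral {a..b} h"
    if "continuous_on {a..b} h" for h :: "real \<Rightarrow> real"
    using t that by (intro Henstock_Kurzweil_Integration.integral_combine integrable_continuous_interval)
  have gl: "continuous_on {a..t} g" and gr: "continuous_on {t..b} g"
    using t gc by (auto elim: continuous_on_subset)
  have left: "(integral {a..t} g)\<^sup>2 \<le> (t - a) * (L2_norm a t g)\<^sup>2"
    using t(1) gl by (rule square_integral_le_L2_norm)
  have "(integral {a..t} g)\<^sup>2 = (integral {t..b} g)\<^sup>2"
    using split[OF gc] mean by (simp add: eq_neg_iff_add_eq_0[symmetric])
  also have "\<dots> \<le> (b - t) * (L2_norm t b g)\<^sup>2"
    using t gr by (intro square_integral_le_L2_norm) auto
  finally have right: "(integral {a..t} g)\<^sup>2 \<le> (b - t) * (L2_norm t b g)\<^sup>2" .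
  have whole: "(L2_norm a t g)\<^sup>2 + (L2_norm t b g)\<^sup>2 = (L2_norm a b g)\<^sup>2"
    unfolding L2_norm_power2 using gc by (intro split continuous_intros)
  have "(b - a) * (integral {a..t} g)\<^sup>2
        = (b - t) * (integral {a..t} g)\<^sup>2 + (t - a) * (integral {a..t} g)\<^sup>2"
    by (simp add: algebra_simps)
  also have "\<dots> \<le> (b - t) * ((t - a) * (L2_norm a t g)\<^sup>2) + (t - a) * ((b - t) * (L2_norm t b g)\<^sup>2)"
    using left right t by (intro add_mono mult_left_mono) auto
  also have "\<dots> = (t - a) * (b - t) * (L2_norm a b g)\<^sup>2"
    unfolding whole[symmetric] by (simp add: algebra_simps)
  also have "\<dots> = (b - a) * ((L2_norm a b g)\<^sup>2 / (b - a) * ((t - a) * (b - t)))"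
    using \<open>a < b\<close> by simp
  finally show ?thesis using \<open>a < b\<close> by (simp only: mult_le_cancel_left_pos diff_gt_0_iff_gt)
qed

lemma integral_bubble:
  fixes a b :: real
  assumes "a \<le> b"
  shows "integral {a..b} (\<lambda>t. (t - a) * (b - t)) = (b - a) ^ 3 / 6"
proof -
  have "integral {a..b} (\<lambda>t. (t - a) * (b - t))
        = (\<lambda>t. (b - a) * (t - a)\<^sup>2 / 2 - (t - a) ^ 3 / 3) b - (\<lambda>t. (b - a) * (t - a)\<^sup>2 / 2 - (t - a) ^ 3 / 3) a"
    using assms
    by (intro integral_eq_antiderivative_diff) (auto intro!: derivative_eq_intros simp: field_simps power2_eq_square)
  then show ?thesis by (simp add: power2_eq_square power3_eq_cube field_simps)
qed

lemma L2_norm_primitive_le_of_zero_mean: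
  fixes g :: "real \<Rightarrow> real"
  assumes "a < b" and gc: "continuous_on {a..b} g" and mean: "integral {a..b} g = 0"
  shows "(L2_norm a b (\<lambda>t. integral {a..t} g))\<^sup>2 \<le> (b - a)\<^sup>2 / 6 * (L2_norm a b g)\<^sup>2"
proof -
  define D where "D = (L2_norm a b g)\<^sup>2"
  have "(L2_norm a b (\<lambda>t. integral {a..t} g))\<^sup>2
        \<le> integral {a..b} (\<lambda>t. D / (b - a) * ((t - a) * (b - t)))"
    unfolding L2_norm_power2
  proof (rule integral_le)
    have "continuous_on {a..b} (\<lambda>t. integral {a..t} g)"
      using gc by (intro indefinite_integral_continuous_1 integrable_continuous_interval)
    then show "(\<lambda>t. (integral {a..t} g)\<^sup>2) integrable_on {a..b}"
      by (intro integrable_continuous_interval continuous_intros)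
    show "(\<lambda>t. D / (b - a) * ((t - a) * (b - t))) integrable_on {a..b}"
      by (intro integrable_continuous_interval continuous_intros)
    show "(integral {a..t} g)\<^sup>2 \<le> D / (b - a) * ((t - a) * (b - t))" if "t \<in> {a..b}" for t
      using square_primitive_le_of_zero_mean[OF _ _ assms] that by (simp add: D_def)
  qed
  also have "\<dots> = D / (b - a) * ((b - a) ^ 3 / 6)"
    using \<open>a < b\<close> by (simp add: integral_bubble)
  also have "\<dots> = (b - a)\<^sup>2 / 6 * D"
    using \<open>a < b\<close> by (simp add: power2_eq_square power3_eq_cube)
  finally show ?thesis unfolding D_def .
qed

lemma linear_interpolation_error:
  fixes u U :: "real \<Rightarrow> real"
  assumes "a < b" and uc: "continuous_on {a..b} u"
    and U: "\<And>t. t \<in> {a..b} \<Longrightarrow> U t = U a + integral {a..t} u"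
  shows "(L2_norm a b (\<lambda>t. U t - (U a + (U b - U a) / (b - a) * (t - a))))\<^sup>2
         \<le> (b - a)\<^sup>2 / 6 * (L2_norm a b u)\<^sup>2"
proof -
  define m where "m = (U b - U a) / (b - a)"
  have centered: "integral {a..t} (\<lambda>x. u x - m) = integral {a..t} u - m * (t - a)" if "t \<in> {a..b}" for t
    using that continuous_on_subset[OF uc, of "{a..t}"]
    by (subst integral_diff) (auto intro: integrable_continuous_interval)
  have mean: "integral {a..b} (\<lambda>x. u x - m) = 0"
    using centered[of b] U[of b] \<open>a < b\<close> by (simp add: m_def)
  have "U t - (U a + m * (t - a)) = integral {a..t} (\<lambda>x. u x - m)" if "t \<in> {a..b}" for t
    using U[OF that] centered[OF that] by simp
  then have "(L2_norm a b (\<lambda>t. U t - (U a + m * (t - a))))\<^sup>2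
             = (L2_norm a b (\<lambda>t. integral {a..t} (\<lambda>x. u x - m)))\<^sup>2"
    unfolding L2_norm_power2 by (intro integral_cong) simp
  also have "\<dots> \<le> (b - a)\<^sup>2 / 6 * (L2_norm a b (\<lambda>x. u x - m))\<^sup>2"
    using \<open>a < b\<close> uc mean by (intro L2_norm_primitive_le_of_zero_mean continuous_intros)
  also have "(L2_norm a b (\<lambda>x. u x - m))\<^sup>2 = (L2_norm a b u)\<^sup>2 - m\<^sup>2 * (b - a)"
  proof -
    have "(L2_norm a b (\<lambda>x. u x - m))\<^sup>2 = integral {a..b} (\<lambda>x. (u x)\<^sup>2 - 2 * m * (u x - m) - m\<^sup>2)"
      unfolding L2_norm_power2 by (simp add: power2_eq_square algebra_simps)
    also have "\<dots> = (L2_norm a b u)\<^sup>2 - m\<^sup>2 * (b - a)"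
      using uc mean \<open>a < b\<close> unfolding L2_norm_power2
      by (simp add: integral_diff integrable_continuous_interval continuous_intros integrable_diff)
    finally show ?thesis .
  qed
  also have "\<dots> \<le> (L2_norm a b u)\<^sup>2" using \<open>a < b\<close> by simp
  finally show ?thesis unfolding m_def by (simp add: mult_left_mono)
qed

section \<open>Partitions and piecewise linear interpolation\<close>

lemma partition_mono:
  assumes "is_partition T l eta" "i \<le> j" "j \<le> Suc l"
  shows "eta i \<le> eta j"
  using assms(2,3)
proof (induction j)
  case (Suc j)
  show ?case
  proof (cases "i = Suc j")
    case False
    then have "eta i \<le> eta j" using Suc by simp
    also have "eta j < eta (Suc j)" using assms(1) Suc.prems unfolding is_partition_def by simp
    finally show ?thesis by simp
  qed simp
qed simp

lemma partition_bounds: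
  assumes "is_partition T l eta" "i \<le> Suc l"
  shows "0 \<le> eta i" "eta i \<le> T"
  using partition_mono[OF assms(1), of 0 i] partition_mono[OF assms(1), of i "Suc l"] assms
  unfolding is_partition_def by auto

lemma cell_length_le_mesh: "i \<le> l \<Longrightarrow> eta (Suc i) - eta i \<le> mesh l eta"
  unfolding mesh_def by (rule Max_ge) auto

lemma mesh_nonneg: "is_partition T l eta \<Longrightarrow> 0 \<le> mesh l eta"
  using cell_length_le_mesh[of 0 l eta] unfolding is_partition_def by fastforce

lemma mesh_le_length:
  assumes "is_partition T l eta"
  shows "mesh l eta \<le> T"
proof -
  have "eta (Suc i) - eta i \<le> T" if "i \<le> l" for i
    using partition_bounds[OF assms, of i] partition_bounds[OF assms, of "Suc i"] that by simp
  then show ?thesis unfolding mesh_def by (subst Max_le_iff) auto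
qed

lemma integral_eq_sum_cells:
  fixes g :: "real \<Rightarrow> real"
  assumes part: "is_partition T l eta" and g: "g integrable_on {0..T}"
  shows "integral {0..T} g = (\<Sum>i\<le>l. integral {eta i..eta (Suc i)} g)"
proof -
  have "integral {0..eta j} g = (\<Sum>i<j. integral {eta i..eta (Suc i)} g)" if "j \<le> Suc l" for j
    using that
  proof (induction j)
    case 0
    then show ?case using part unfolding is_partition_def by simp
  next
    case (Suc j)
    have "0 \<le> eta j" "eta j \<le> eta (Suc j)" "eta (Suc j) \<le> T"
      using partition_bounds[OF part] partition_mono[OF part] Suc.prems by auto
    then have "integral {0..eta j} g + integral {eta j..eta (Suc j)} g = integral {0..eta (Suc j)} g"
      using integrable_subinterval_real[OF g]
      by (intro Henstock_Kurzweil_Integration.integral_combine) auto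
    then show ?case using Suc by simp
  qed
  from this[of "Suc l"] show ?thesis
    using part unfolding is_partition_def by (simp add: lessThan_Suc_atMost)
qed

definition pl_slope :: "(nat \<Rightarrow> real) \<Rightarrow> (real \<Rightarrow> real) \<Rightarrow> nat \<Rightarrow> real" where
  "pl_slope eta g i = (g (eta (Suc i)) - g (eta i)) / (eta (Suc i) - eta i)"

text \<open>Piecewise linear interpolation at the nodes, written as a sum of ramps
  \<open>max 0 (t - eta i)\<close> weighted by the jumps of the slope.\<close>

definition pl_interp :: "nat \<Rightarrow> (nat \<Rightarrow> real) \<Rightarrow> (real \<Rightarrow> real) \<Rightarrow> real \<Rightarrow> real" where
  "pl_interp l eta g t = g (eta 0) +
     (\<Sum>i\<le>l. (pl_slope eta g i - (if i = 0 then 0 else pl_slope eta g (i - 1))) * max 0 (t - eta i))"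

lemma continuous_on_pl_interp: "continuous_on S (pl_interp l eta g)"
  unfolding pl_interp_def by (intro continuous_intros)

lemma pl_interp_cell:
  assumes part: "is_partition T l eta" and j: "j \<le> l" and t: "t \<in> {eta j..eta (Suc j)}"
  shows "pl_interp l eta g t = g (eta j) + pl_slope eta g j * (t - eta j)"
proof -
  define jump where "jump i = pl_slope eta g i - (if i = 0 then 0 else pl_slope eta g (i - 1))" for i
  have partial: "(\<Sum>i\<le>k. jump i * (t - eta i)) = g (eta k) - g (eta 0) + pl_slope eta g k * (t - eta k)"
    if "k \<le> l" for k
    using that
  proof (induction k)
    case (Suc k)
    have "eta k < eta (Suc k)" using part Suc.prems unfolding is_partition_def by simp
    then have "g (eta (Suc k)) = g (eta k) + pl_slope eta g k * (eta (Suc k) - eta k)"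
      unfolding pl_slope_def by simp
    then show ?case using Suc by (simp add: jump_def algebra_simps)
  qed (simp add: jump_def)
  have "jump i * max 0 (t - eta i) = (if i \<le> j then jump i * (t - eta i) else 0)" if "i \<le> l" for i
    using partition_mono[OF part, of i j] partition_mono[OF part, of "Suc j" i] that j t by auto
  then have "pl_interp l eta g t = g (eta 0) + (\<Sum>i\<le>l. if i \<le> j then jump i * (t - eta i) else 0)"
    unfolding pl_interp_def jump_def[symmetric] by (intro arg_cong2[where f = "(+)"] sum.cong) auto
  also have "(\<Sum>i\<le>l. if i \<le> j then jump i * (t - eta i) else 0) = (\<Sum>i\<le>j. jump i * (t - eta i))"
  proof -
    have "{..l} \<inter> {i. i \<le> j} = {..j}" using j by auto
    then show ?thesis by (simp add: sum.If_cases)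
  qed
  finally show ?thesis using partial[OF j] by simp
qed

lemma pl_interp_error_cell:
  fixes u :: "real \<Rightarrow> real"
  assumes part: "is_partition T l eta" and uc: "continuous_on {0..T} u" and "i \<le> l"
  defines "U \<equiv> \<lambda>t. integral {0..t} u"
  shows "integral {eta i..eta (Suc i)} (\<lambda>t. (U t - pl_interp l eta U t)\<^sup>2)
         \<le> (mesh l eta)\<^sup>2 / 6 * integral {eta i..eta (Suc i)} (\<lambda>t. (u t)\<^sup>2)"
proof -
  define a b where "a = eta i" and "b = eta (Suc i)"
  have ab: "a < b" "0 \<le> a" "b \<le> T"
    using \<open>i \<le> l\<close> part partition_bounds[OF part, of i] partition_bounds[OF part, of "Suc i"]
    unfolding a_def b_def is_partition_def by auto
  have err: "U t - pl_interp l eta U t = U t - (U a + (U b - U a) / (b - a) * (t - a))" if "t \<in> {a..b}" for t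
    using pl_interp_cell[OF part \<open>i \<le> l\<close>, of t U] that unfolding a_def b_def pl_slope_def by simp
  have "integral {a..b} (\<lambda>t. (U t - pl_interp l eta U t)\<^sup>2)
        = (L2_norm a b (\<lambda>t. U t - (U a + (U b - U a) / (b - a) * (t - a))))\<^sup>2"
    unfolding L2_norm_power2 by (rule integral_cong) (simp only: err)
  also have "\<dots> \<le> (b - a)\<^sup>2 / 6 * (L2_norm a b u)\<^sup>2"
  proof (rule linear_interpolation_error)
    show "U t = U a + integral {a..t} u" if "t \<in> {a..b}" for t
      unfolding U_def using that ab continuous_on_subset[OF uc, of "{0..t}"]
      by (intro Henstock_Kurzweil_Integration.integral_combine[symmetric] integrable_continuous_interval) auto
  qed (use ab continuous_on_subset[OF uc, of "{a..b}"] in auto)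
  also have "\<dots> \<le> (mesh l eta)\<^sup>2 / 6 * (L2_norm a b u)\<^sup>2"
    using cell_length_le_mesh[OF \<open>i \<le> l\<close>] ab unfolding a_def b_def
    by (intro mult_right_mono divide_right_mono power_mono) auto
  finally show ?thesis unfolding L2_norm_power2 a_def b_def .
qed

lemma pl_interp_error:
  fixes u :: "real \<Rightarrow> real"
  assumes part: "is_partition T l eta" and uc: "continuous_on {0..T} u"
  defines "U \<equiv> \<lambda>t. integral {0..t} u"
  shows "(L2_norm 0 T (\<lambda>t. U t - pl_interp l eta U t))\<^sup>2 \<le> (mesh l eta)\<^sup>2 / 6 * (L2_norm 0 T u)\<^sup>2"
proof -
  have Uc: "continuous_on {0..T} U"
    unfolding U_def using uc by (intro indefinite_integral_continuous_1 integrable_continuous_interval)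
  have "(L2_norm 0 T (\<lambda>t. U t - pl_interp l eta U t))\<^sup>2
        = (\<Sum>i\<le>l. integral {eta i..eta (Suc i)} (\<lambda>t. (U t - pl_interp l eta U t)\<^sup>2))"
    unfolding L2_norm_power2 using part Uc continuous_on_pl_interp
    by (intro integral_eq_sum_cells integrable_continuous_interval continuous_intros)
  also have "\<dots> \<le> (\<Sum>i\<le>l. (mesh l eta)\<^sup>2 / 6 * integral {eta i..eta (Suc i)} (\<lambda>t. (u t)\<^sup>2))"
    using pl_interp_error_cell[OF part uc] unfolding U_def by (intro sum_mono) auto
  also have "\<dots> = (mesh l eta)\<^sup>2 / 6 * (L2_norm 0 T u)\<^sup>2"
    unfolding L2_norm_power2 sum_distrib_left[symmetric] using part uc
    by (subst integral_eq_sum_cells) (auto intro!: integrable_continuous_interval continuous_intros)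
  finally show ?thesis .
qed

lemma primitive_of_affine_is_quadratic:
  fixes g :: "real \<Rightarrow> real"
  assumes "0 \<le> a" "a \<le> b" and gc: "continuous_on {0..b} g" and affine: "\<And>t. t \<in> {a..b} \<Longrightarrow> g t = \<alpha> + \<beta> * t"
  shows "\<exists>c0 c1 c2. \<forall>t\<in>{a..b}. integral {0..t} g = c0 + c1 * t + c2 * t ^ 2"
proof (intro exI ballI)
  fix t assume t: "t \<in> {a..b}"
  have "integral {0..t} g = integral {0..a} g + integral {a..t} g"
    using assms t continuous_on_subset[OF gc, of "{0..t}"]
    by (intro Henstock_Kurzweil_Integration.integral_combine[symmetric] integrable_continuous_interval) auto
  also have "integral {a..t} g = integral {a..t} (\<lambda>x. \<alpha> + \<beta> * x)"
    using t affine by (intro integral_cong) auto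
  also have "\<dots> = (\<lambda>x. \<alpha> * x + \<beta> * x\<^sup>2 / 2) t - (\<lambda>x. \<alpha> * x + \<beta> * x\<^sup>2 / 2) a"
    using t by (intro integral_eq_antiderivative_diff) (auto intro!: derivative_eq_intros)
  finally show "integral {0..t} g = (integral {0..a} g - \<alpha> * a - \<beta> * a\<^sup>2 / 2) + \<alpha> * t + \<beta> / 2 * t ^ 2"
    by simp
qed

section \<open>The bilinear form and the seminorm\<close>

lemma deriv_eq_on_interior:
  assumes "\<And>t. t \<in> {a..b} \<Longrightarrow> (w has_real_derivative r t) (at t within {a..b})" "t \<in> {a<..<b}"
  shows "deriv w t = r t"
proof -
  have "t \<in> {a..b}" "a < t" "t < b" using assms(2) by auto
  then show ?thesis using assms(1) by (metis DERIV_imp_deriv at_within_Icc_at)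
qed

lemma H1semi_eq_L2_norm:
  assumes "\<And>t. t \<in> {0..T} \<Longrightarrow> (w has_real_derivative r t) (at t within {0..T})"
  shows "H1semi T w = L2_norm 0 T r"
  unfolding H1semi_def L2_norm_def
  using deriv_eq_on_interior[OF assms]
  by (intro arg_cong[where f = sqrt] integral_spike[of "{0, T}"]) auto

lemma H1semi_eq_0_if_vanishing:
  assumes "\<forall>t\<in>{0..T}. w t = 0"
  shows "H1semi T w = 0"
proof -
  have "deriv w t = 0" if "t \<in> {0<..<T}" for t
  proof (rule DERIV_imp_deriv)
    show "(w has_real_derivative 0) (at t)"
      by (rule has_field_derivative_transform_within_open[where f = "\<lambda>_. 0" and S = "{0<..<T}"])
        (use assms that in auto)
  qed
  then have "integral {0..T} (\<lambda>t. (deriv w t)\<^sup>2) = integral {0..T} (\<lambda>t. 0)"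
    by (intro integral_spike[of "{0, T}"]) auto
  then show ?thesis unfolding H1semi_def by simp
qed

text \<open>The boundary terms of the integration by parts vanish since \<open>integral {0..0} u = 0\<close>
  and \<open>HT T w T = 0\<close>.\<close>

lemma bilin_a_HT_eq:
  fixes u p w r :: "real \<Rightarrow> real"
  assumes "0 \<le> T"
    and du: "\<And>t. t \<in> {0..T} \<Longrightarrow> (u has_real_derivative p t) (at t within {0..T})"
    and pc: "continuous_on {0..T} p"
    and dw: "\<And>t. t \<in> {0..T} \<Longrightarrow> (w has_real_derivative r t) (at t within {0..T})"
    and rc: "continuous_on {0..T} r"
  shows "bilin_a T \<mu> u (HT T w) = integral {0..T} (\<lambda>t. (p t + \<mu> * integral {0..t} u) * r t)"
proof -
  define U where "U t = integral {0..t} u" for t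
  have uc: "continuous_on {0..T} u" using du by (rule DERIV_continuous_on)
  have wc: "continuous_on {0..T} w" using dw by (rule DERIV_continuous_on)
  have dU: "(U has_real_derivative u t) (at t within {0..T})" if "t \<in> {0..T}" for t
    unfolding U_def using uc that by (rule integral_has_real_derivative)
  have Uc: "continuous_on {0..T} U" using dU by (rule DERIV_continuous_on)
  have dHT: "(HT T w has_real_derivative - r t) (at t within {0..T})" if "t \<in> {0..T}" for t
    unfolding HT_def using dw[OF that] by (auto intro!: derivative_eq_intros)
  have stiffness: "integral {0..T} (\<lambda>t. deriv u t * deriv (HT T w) t) = - integral {0..T} (\<lambda>t. p t * r t)"
  proof -
    have "integral {0..T} (\<lambda>t. deriv u t * deriv (HT T w) t) = integral {0..T} (\<lambda>t. - (p t * r t))"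
      using deriv_eq_on_interior[OF du] deriv_eq_on_interior[OF dHT]
      by (intro integral_spike[of "{0, T}"]) auto
    then show ?thesis by simp
  qed
  have "integral {0..T} (\<lambda>t. u t * HT T w t - U t * r t)
        = (\<lambda>t. U t * HT T w t) T - (\<lambda>t. U t * HT T w t) 0"
    using \<open>0 \<le> T\<close> dU dHT
    by (intro integral_eq_antiderivative_diff) (auto intro!: derivative_eq_intros)
  also have "\<dots> = 0" by (simp add: U_def HT_def)
  finally have mass: "integral {0..T} (\<lambda>t. u t * HT T w t) = integral {0..T} (\<lambda>t. U t * r t)"
    using uc wc Uc rc unfolding HT_def by (simp add: integral_diff integrable_continuous_interval continuous_intros)
  have "integral {0..T} (\<lambda>t. (p t + \<mu> * U t) * r t)
        = integral {0..T} (\<lambda>t. p t * r t) + \<mu> * integral {0..T} (\<lambda>t. U t * r t)"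
    using pc Uc rc by (simp add: distrib_right integral_add integrable_continuous_interval continuous_intros mult.assoc)
  then show ?thesis
    unfolding bilin_a_def stiffness mass U_def by simp
qed

section \<open>Numerical estimates\<close>

lemma pi_squared_le: "pi\<^sup>2 \<le> 98697 / 10000"
proof -
  have "pi\<^sup>2 \<le> 3.1415926535899\<^sup>2"
    using pi_approx(2) by (intro power_mono) auto
  also have "\<dots> \<le> 98697 / 10000" by (simp add: power2_eq_square)
  finally show ?thesis .
qed

lemma one_minus_over_one_plus_antimono:
  fixes k m :: real
  assumes "0 \<le> k" "k \<le> m"
  shows "(1 - m) / (1 + m) \<le> (1 - k) / (1 + k)"
  using assms by (simp add: divide_simps algebra_simps)

lemma stability_poly_small:
  fixes s :: real
  assumes "0 \<le> s" "s \<le> 3/2"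
  shows "2 * (1 + 71/100 * s) * (173 + 50 * s\<^sup>2) \<le> (173 - 50 * s\<^sup>2) * (2 + s)\<^sup>2 * (1 + 405/1000 * s\<^sup>2)"
proof -
  have expand: "(173 - 50 * s\<^sup>2) * (2 + s)\<^sup>2 * (1 + 405/1000 * s\<^sup>2) - 2 * (1 + 71/100 * s) * (173 + 50 * s\<^sup>2)
     = 346 + 22317/50 * s + 7663/50 * s^2 + 463/50 * s^3 - 12187/200 * s^4 - 81 * s^5 - 81/4 * s^6"
    by (simp add: power2_eq_square power3_eq_cube power4_eq_xxxx algebra_simps eval_nat_numeral)
  have "s * s^n \<le> 3/2 * s^n" for n
    using assms by (intro mult_right_mono) auto
  from this[of 1] this[of 2] this[of 3] this[of 4] this[of 5]
  have "s^2 \<le> 3/2 * s" "s^3 \<le> 3/2 * s^2" "s^4 \<le> 3/2 * s^3" "s^5 \<le> 3/2 * s^4" "s^6 \<le> 3/2 * s^5"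
    by (simp_all add: eval_nat_numeral)
  then show ?thesis using expand assms by linarith
qed

lemma stability_poly_large:
  fixes s :: real
  assumes "3/2 \<le> s"
  shows "2 * (1 + 71/100 * s) * (s + 4016/1000) \<le> (s - 16/1000) * (2 + s)\<^sup>2 * (1 + 405/1000 * s\<^sup>2)"
proof -
  define x where "x = s - 3/2"
  have "0 \<le> x" using assms by (simp add: x_def)
  have "(s - 16/1000) * (2 + s)\<^sup>2 * (1 + 405/1000 * s\<^sup>2) - 2 * (1 + 71/100 * s) * (s + 4016/1000)
     = 9570827/800000 + 21356657/400000 * x + 4966271/100000 * x^2 + 213877/10000 * x^3
       + 232551/50000 * x^4 + 81/200 * x^5"
    unfolding x_def by (simp add: power2_eq_square power3_eq_cube power4_eq_xxxx eval_nat_numeral field_simps)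
  moreover have "0 \<le> 9570827/800000 + 21356657/400000 * x + 4966271/100000 * x^2 + 213877/10000 * x^3
       + 232551/50000 * x^4 + 81/200 * x^5"
    using \<open>0 \<le> x\<close> by simp
  ultimately show ?thesis by linarith
qed

lemma divide_le_divide_cross:
  fixes a b c d :: real
  assumes "0 < b" "0 < d" "a * d \<le> c * b"
  shows "a / b \<le> c / d"
  using assms by (simp add: field_simps)

text \<open>In the application \<open>s = \<surd>\<mu> T\<close> and \<open>k = \<mu> h T / \<surd>12\<close>. For \<open>s \<le> 3/2\<close> the bound \<open>h \<le> T\<close>
  (i.e. \<open>k \<surd>12 \<le> s\<^sup>2\<close>) is the relevant one, for \<open>s \<ge> 3/2\<close> the mesh condition
  (i.e. \<open>k \<surd>24 (2 + s) \<le> \<pi>\<^sup>2\<close>); in both regimes \<open>\<pi>\<^sup>2\<close>, \<open>\<surd>2\<close>, \<open>\<surd>12\<close>, \<open>\<surd>24\<close> are replaced by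
  rational bounds, leaving polynomial inequalities in \<open>s\<close>.\<close>

lemma stability_constant_le_rational:
  fixes s :: real
  assumes "0 < s"
  shows "2 * pi\<^sup>2 / ((2 + s)\<^sup>2 * (pi\<^sup>2 + 4 * s\<^sup>2)) * (1 + s / sqrt 2)
         \<le> 2 * (1 + 71/100 * s) / ((2 + s)\<^sup>2 * (1 + 405/1000 * s\<^sup>2))"
proof -
  have D: "0 < (2 + s)\<^sup>2 * (1 + 405/1000 * s\<^sup>2)" using assms by (simp add: add_pos_nonneg)
  have "2 * pi\<^sup>2 / ((2 + s)\<^sup>2 * (pi\<^sup>2 + 4 * s\<^sup>2)) \<le> 2 / ((2 + s)\<^sup>2 * (1 + 405/1000 * s\<^sup>2))"
  proof (rule divide_le_divide_cross)
    have "pi\<^sup>2 * s\<^sup>2 \<le> 98697 / 10000 * s\<^sup>2" using pi_squared_le by (rule mult_right_mono) simp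
    moreover have "pi\<^sup>2 * (1 + 405/1000 * s\<^sup>2) = pi\<^sup>2 + 405/1000 * (pi\<^sup>2 * s\<^sup>2)"
      by (simp add: algebra_simps)
    ultimately have "pi\<^sup>2 * (1 + 405/1000 * s\<^sup>2) \<le> pi\<^sup>2 + 4 * s\<^sup>2"
      using zero_le_power2[of s] by linarith
    from mult_left_mono[OF this, of "2 * (2 + s)\<^sup>2"]
    show "2 * pi\<^sup>2 * ((2 + s)\<^sup>2 * (1 + 405/1000 * s\<^sup>2)) \<le> 2 * ((2 + s)\<^sup>2 * (pi\<^sup>2 + 4 * s\<^sup>2))"
      by (simp add: mult_ac)
  qed (use D assms in \<open>auto intro!: mult_pos_pos add_pos_nonneg\<close>)
  moreover have "1 + s / sqrt 2 \<le> 1 + 71/100 * s"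
  proof -
    have "100/71 \<le> sqrt 2" by (rule real_le_rsqrt) (simp add: power2_eq_square)
    then have "s / sqrt 2 \<le> s / (100/71)" using assms by (intro divide_left_mono) auto
    then show ?thesis by simp
  qed
  ultimately have "2 * pi\<^sup>2 / ((2 + s)\<^sup>2 * (pi\<^sup>2 + 4 * s\<^sup>2)) * (1 + s / sqrt 2)
                   \<le> 2 / ((2 + s)\<^sup>2 * (1 + 405/1000 * s\<^sup>2)) * (1 + 71/100 * s)"
    by (rule mult_mono) (use D assms in auto)
  then show ?thesis by simp
qed

lemma stability_rational_le_small:
  fixes s k :: real
  assumes "0 < s" "s \<le> 3/2" "0 \<le> k" "k * sqrt 12 \<le> s\<^sup>2"
  shows "2 * (1 + 71/100 * s) / ((2 + s)\<^sup>2 * (1 + 405/1000 * s\<^sup>2)) \<le> (1 - k) / (1 + k)"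
proof -
  define m where "m = 50 * s\<^sup>2 / 173"
  have "k * (346/100) \<le> k * sqrt 12"
    using \<open>0 \<le> k\<close> by (intro mult_left_mono real_le_rsqrt) (auto simp: power2_eq_square)
  then have "k \<le> m" using assms(4) unfolding m_def by simp
  have "2 * (1 + 71/100 * s) / ((2 + s)\<^sup>2 * (1 + 405/1000 * s\<^sup>2)) \<le> (173 - 50 * s\<^sup>2) / (173 + 50 * s\<^sup>2)"
    using stability_poly_small[of s] assms by (intro divide_le_divide_cross) (auto simp: add_pos_nonneg mult.assoc)
  also have "\<dots> = (173 * (1 - m)) / (173 * (1 + m))" unfolding m_def by (simp add: algebra_simps)
  also have "\<dots> = (1 - m) / (1 + m)" by (rule mult_divide_mult_cancel_left) simp
  also have "\<dots> \<le> (1 - k) / (1 + k)" using \<open>0 \<le> k\<close> \<open>k \<le> m\<close> by (rule one_minus_over_one_plus_antimono)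
  finally show ?thesis .
qed

lemma stability_rational_le_large:
  fixes s k :: real
  assumes "3/2 \<le> s" "0 \<le> k" "k * sqrt 24 * (2 + s) \<le> pi\<^sup>2"
  shows "2 * (1 + 71/100 * s) / ((2 + s)\<^sup>2 * (1 + 405/1000 * s\<^sup>2)) \<le> (1 - k) / (1 + k)"
proof -
  define m where "m = (2016/1000) / (2 + s)"
  have "k * (4898/1000) * (2 + s) \<le> k * sqrt 24 * (2 + s)"
    using assms by (intro mult_right_mono mult_left_mono real_le_rsqrt) (auto simp: power2_eq_square)
  then have "k * (2 + s) \<le> 2016/1000" using assms(3) pi_squared_le by linarith
  then have "k \<le> m" unfolding m_def using assms(1) by (simp add: field_simps)
  have "2 * (1 + 71/100 * s) / ((2 + s)\<^sup>2 * (1 + 405/1000 * s\<^sup>2)) \<le> (s - 16/1000) / (s + 4016/1000)"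
    using stability_poly_large[of s] assms by (intro divide_le_divide_cross) (auto simp: add_pos_nonneg mult.assoc)
  also have "\<dots> = ((2 + s) * (1 - m)) / ((2 + s) * (1 + m))"
  proof -
    have "(2 + s) * (x / (2 + s)) = x" for x using assms(1) by simp
    then have m: "(2 + s) * m = 2016/1000" unfolding m_def .
    have "s - 16/1000 = (2 + s) * (1 - m)" "s + 4016/1000 = (2 + s) * (1 + m)"
      by (simp_all only: right_diff_distrib distrib_left mult_1_right m)
    then show ?thesis by (simp only:)
  qed
  also have "\<dots> = (1 - m) / (1 + m)" by (rule mult_divide_mult_cancel_left) (use assms(1) in simp)
  also have "\<dots> \<le> (1 - k) / (1 + k)" using \<open>0 \<le> k\<close> \<open>k \<le> m\<close> by (rule one_minus_over_one_plus_antimono)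
  finally show ?thesis .
qed

lemma stability_constant_le:
  fixes s k :: real
  assumes "0 < s" "0 \<le> k" and "k * sqrt 12 \<le> s\<^sup>2" and "k * sqrt 24 * (2 + s) \<le> pi\<^sup>2"
  shows "2 * pi\<^sup>2 / ((2 + s)\<^sup>2 * (pi\<^sup>2 + 4 * s\<^sup>2)) * (1 + s / sqrt 2) \<le> (1 - k) / (1 + k)"
proof -
  have "2 * (1 + 71/100 * s) / ((2 + s)\<^sup>2 * (1 + 405/1000 * s\<^sup>2)) \<le> (1 - k) / (1 + k)"
    using assms stability_rational_le_small[of s k] stability_rational_le_large[of s k]
    by (cases "s \<le> 3/2") auto
  with stability_constant_le_rational[OF \<open>0 < s\<close>] show ?thesis by (rule order_trans)
qed
lemma ratio_lower_bound:
  fixes X y c N k :: real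
  assumes "0 < X" "k < 1" "y \<le> k * X" "c \<le> X * y" "0 < N" "N \<le> X + y"
  shows "X * (1 - k) / (1 + k) \<le> (X\<^sup>2 - c) / N"
proof -
  have "c \<le> X * (k * X)"
    using assms(1,4) mult_left_mono[OF assms(3), of X] by linarith
  then have "X\<^sup>2 * (1 - k) \<le> X\<^sup>2 - c" by (simp add: power2_eq_square algebra_simps)
  moreover have "0 \<le> X\<^sup>2 * (1 - k)" using assms by simp
  moreover have "N \<le> X * (1 + k)" using assms by (simp add: algebra_simps)
  ultimately have "X\<^sup>2 * (1 - k) / (X * (1 + k)) \<le> (X\<^sup>2 - c) / N"
    using assms by (intro frac_le) linarith+
  then show ?thesis using \<open>0 < X\<close> by (simp add: power2_eq_square)
qed

lemma stability_constant_le_mesh: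
  fixes T \<mu> h :: real
  assumes "0 < T" "0 < \<mu>" "0 \<le> h" "h \<le> T"
    and mesh: "h \<le> pi\<^sup>2 / (sqrt 2 * (2 + sqrt \<mu> * T) * \<mu> * T)"
  defines "k \<equiv> \<mu> * h * T / sqrt 12"
  shows "2 * pi\<^sup>2 / ((2 + sqrt \<mu> * T)\<^sup>2 * (pi\<^sup>2 + 4 * \<mu> * T\<^sup>2)) * (1 + sqrt \<mu> * T / sqrt 2)
         \<le> (1 - k) / (1 + k)"
proof -
  define s where "s = sqrt \<mu> * T"
  have s: "0 < s" "s\<^sup>2 = \<mu> * T\<^sup>2"
    unfolding s_def using assms by (auto simp: power_mult_distrib)
  have "0 \<le> k" unfolding k_def using assms by simp
  have "k * sqrt 12 = \<mu> * T * h" unfolding k_def by simp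
  also have "\<dots> \<le> \<mu> * T * T" using assms by (intro mult_left_mono) auto
  finally have "k * sqrt 12 \<le> s\<^sup>2" unfolding s(2) by (simp add: power2_eq_square)
  moreover have "k * sqrt 24 * (2 + s) \<le> pi\<^sup>2"
  proof -
    have "0 < sqrt 2 * (2 + s) * \<mu> * T" using s assms by simp
    moreover have "k * sqrt 24 * (2 + s) = h * (sqrt 2 * (2 + s) * \<mu> * T)"
      unfolding k_def by (simp add: real_sqrt_mult[of 12 2, simplified])
    moreover have "h * (sqrt 2 * (2 + s) * \<mu> * T) \<le> pi\<^sup>2"
      using mesh[folded s_def] \<open>0 < sqrt 2 * (2 + s) * \<mu> * T\<close> by (simp add: le_divide_eq)
    ultimately show ?thesis by linarith
  qed
  ultimately show ?thesis
    using stability_constant_le[OF s(1) \<open>0 \<le> k\<close>] unfolding s_def[symmetric] s(2) by (simp add: mult.assoc)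
qed

section \<open>The test function\<close>

locale Vh0_function =
  fixes T \<mu> :: real and l :: nat and eta :: "nat \<Rightarrow> real" and u p :: "real \<Rightarrow> real"
  assumes T_pos: "0 < T" and \<mu>_pos: "0 < \<mu>" and part: "is_partition T l eta"
    and du: "\<And>t. t \<in> {0..T} \<Longrightarrow> (u has_real_derivative p t) (at t within {0..T})"
    and pc: "continuous_on {0..T} p" and u0: "u 0 = 0"
    and u_cells: "\<forall>i\<le>l. \<exists>c0 c1 c2. \<forall>t\<in>{eta i..eta (Suc i)}. u t = c0 + c1 * t + c2 * t ^ 2"
begin

definition U :: "real \<Rightarrow> real" where
  "U = (\<lambda>t. integral {0..t} u)"

definition f :: "real \<Rightarrow> real" where
  "f = (\<lambda>t. p t + \<mu> * U t)"

definition e :: "real \<Rightarrow> real" where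
  "e = (\<lambda>t. U t - pl_interp l eta U t)"

definition v :: "real \<Rightarrow> real" where
  "v = (\<lambda>t. u t + \<mu> * integral {0..t} (pl_interp l eta U))"

abbreviation ratios :: "real set" where
  "ratios \<equiv> {bilin_a T \<mu> u (HT T w) / H1semi T w | w. w \<in> Vh0 T l eta \<and> (\<exists>t\<in>{0..T}. w t \<noteq> 0)}"

lemma continuous_u: "continuous_on {0..T} u"
  using du by (rule DERIV_continuous_on)

lemma has_derivative_U: "t \<in> {0..T} \<Longrightarrow> (U has_real_derivative u t) (at t within {0..T})"
  unfolding U_def using continuous_u by (rule integral_has_real_derivative)

lemma continuous_U: "continuous_on {0..T} U"
  using has_derivative_U by (rule DERIV_continuous_on)

lemma continuous_f: "continuous_on {0..T} f"
  unfolding f_def using pc continuous_U by (intro continuous_intros)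

lemma continuous_e: "continuous_on {0..T} e"
  unfolding e_def using continuous_U continuous_on_pl_interp by (intro continuous_intros)

lemma bilin_a_HT:
  assumes "\<And>t. t \<in> {0..T} \<Longrightarrow> (w has_real_derivative r t) (at t within {0..T})"
    and "continuous_on {0..T} r"
  shows "bilin_a T \<mu> u (HT T w) = integral {0..T} (\<lambda>t. f t * r t)"
  unfolding f_def U_def using T_pos by (intro bilin_a_HT_eq du pc assms) auto

lemma H1semi_u: "H1semi T u = L2_norm 0 T (\<lambda>t. f t - \<mu> * U t)"
proof -
  have "H1semi T u = L2_norm 0 T p" using du by (rule H1semi_eq_L2_norm)
  then show ?thesis by (simp add: f_def)
qed

lemma energy_L2_bound: "(L2_norm 0 T u)\<^sup>2 + \<mu> * (L2_norm 0 T U)\<^sup>2 \<le> T\<^sup>2 / 2 * (L2_norm 0 T f)\<^sup>2"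
proof -
  have "(L2_norm 0 T u)\<^sup>2 + \<mu> * (L2_norm 0 T U)\<^sup>2 = integral {0..T} (\<lambda>t. (u t)\<^sup>2 + \<mu> * (U t)\<^sup>2)"
    unfolding L2_norm_power2 using continuous_u continuous_U
    by (simp add: integral_add integrable_continuous_interval continuous_intros)
  also have "\<dots> \<le> integral {0..T} (\<lambda>t. (L2_norm 0 T f)\<^sup>2 * t)"
  proof (rule integral_le)
    show "(u t)\<^sup>2 + \<mu> * (U t)\<^sup>2 \<le> (L2_norm 0 T f)\<^sup>2 * t" if "t \<in> {0..T}" for t
      using energy_estimate[OF less_imp_le[OF \<mu>_pos] pc du u0 that]
      by (simp add: U_def f_def mult.commute)
  qed (use continuous_u continuous_U in \<open>auto intro!: integrable_continuous_interval continuous_intros\<close>)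
  also have "integral {0..T} (\<lambda>t. t) = T\<^sup>2 / 2"
    using T_pos by (subst integral_eq_antiderivative_diff[where F = "\<lambda>t. t\<^sup>2 / 2"])
      (auto intro!: derivative_eq_intros)
  then have "integral {0..T} (\<lambda>t. (L2_norm 0 T f)\<^sup>2 * t) = T\<^sup>2 / 2 * (L2_norm 0 T f)\<^sup>2"
    by simp
  finally show ?thesis .
qed

lemma L2_norm_u_le: "(L2_norm 0 T u)\<^sup>2 \<le> T\<^sup>2 / 2 * (L2_norm 0 T f)\<^sup>2"
  using energy_L2_bound \<mu>_pos by (smt (verit) mult_nonneg_nonneg zero_le_power2)

lemma L2_norm_U_le: "\<mu> * (L2_norm 0 T U)\<^sup>2 \<le> T\<^sup>2 / 2 * (L2_norm 0 T f)\<^sup>2"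
  using energy_L2_bound by (smt (verit) zero_le_power2)

lemma H1semi_u_le: "H1semi T u \<le> (1 + sqrt \<mu> * T / sqrt 2) * L2_norm 0 T f"
proof -
  have "\<mu> * L2_norm 0 T U = sqrt \<mu> * sqrt (\<mu> * (L2_norm 0 T U)\<^sup>2)"
    using \<mu>_pos L2_norm_nonneg[of 0 T U] by (simp add: real_sqrt_mult mult.assoc[symmetric])
  also have "\<dots> \<le> sqrt \<mu> * sqrt (T\<^sup>2 / 2 * (L2_norm 0 T f)\<^sup>2)"
    using L2_norm_U_le \<mu>_pos by (intro mult_left_mono real_sqrt_le_mono) auto
  also have "\<dots> = sqrt \<mu> * T / sqrt 2 * L2_norm 0 T f"
    using T_pos L2_norm_nonneg[of 0 T f] by (simp add: real_sqrt_mult real_sqrt_divide)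
  finally have U_bound: "\<mu> * L2_norm 0 T U \<le> sqrt \<mu> * T / sqrt 2 * L2_norm 0 T f" .
  have "continuous_on {0..T} (\<lambda>t. \<mu> * U t)"
    using continuous_U by (intro continuous_intros)
  from L2_norm_diff_le[OF continuous_f this]
  have "H1semi T u \<le> L2_norm 0 T f + \<mu> * L2_norm 0 T U"
    unfolding H1semi_u using \<mu>_pos by (simp add: L2_norm_cmult)
  with U_bound show ?thesis by (simp add: algebra_simps)
qed

lemma L2_norm_e_le: "\<mu> * L2_norm 0 T e \<le> \<mu> * mesh l eta * T / sqrt 12 * L2_norm 0 T f"
proof -
  have "(L2_norm 0 T e)\<^sup>2 \<le> (mesh l eta)\<^sup>2 / 6 * (L2_norm 0 T u)\<^sup>2"
    using pl_interp_error[OF part continuous_u] by (simp add: e_def U_def)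
  also have "\<dots> \<le> (mesh l eta)\<^sup>2 / 6 * (T\<^sup>2 / 2 * (L2_norm 0 T f)\<^sup>2)"
    using L2_norm_u_le by (rule mult_left_mono) simp
  also have "\<dots> = (mesh l eta * T / sqrt 12 * L2_norm 0 T f)\<^sup>2"
    by (simp add: power_mult_distrib power_divide)
  finally have "L2_norm 0 T e \<le> mesh l eta * T / sqrt 12 * L2_norm 0 T f"
    by (rule power2_le_imp_le) (use mesh_nonneg[OF part] T_pos L2_norm_nonneg[of 0 T f] in simp)
  from mult_left_mono[OF this less_imp_le[OF \<mu>_pos]] show ?thesis by (simp add: mult.assoc)
qed

lemma has_derivative_v: "t \<in> {0..T} \<Longrightarrow> (v has_real_derivative f t - \<mu> * e t) (at t within {0..T})"
  unfolding v_def f_def e_def using continuous_on_pl_interp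
  by (auto intro!: derivative_eq_intros du integral_has_real_derivative simp: algebra_simps)

lemma continuous_derivative_v: "continuous_on {0..T} (\<lambda>t. f t - \<mu> * e t)"
  using continuous_f continuous_e by (intro continuous_intros)

lemma v_in_Vh0: "v \<in> Vh0 T l eta"
proof -
  have "C1_on T v"
    unfolding C1_on_def using has_derivative_v continuous_derivative_v
    by (intro exI[of _ "\<lambda>t. f t - \<mu> * e t"]) auto
  moreover have "\<exists>c0 c1 c2. \<forall>t\<in>{eta i..eta (Suc i)}. v t = c0 + c1 * t + c2 * t ^ 2"
    if i: "i \<le> l" for i
  proof -
    obtain c0 c1 c2 where u: "\<forall>t\<in>{eta i..eta (Suc i)}. u t = c0 + c1 * t + c2 * t ^ 2"
      using u_cells i by blast
    have "\<exists>d0 d1 d2. \<forall>t\<in>{eta i..eta (Suc i)}.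
            integral {0..t} (pl_interp l eta U) = d0 + d1 * t + d2 * t ^ 2"
    proof (rule primitive_of_affine_is_quadratic)
      show "0 \<le> eta i" "eta i \<le> eta (Suc i)"
        using partition_bounds[OF part, of i] partition_mono[OF part, of i "Suc i"] i by auto
      show "pl_interp l eta U t = (U (eta i) - pl_slope eta U i * eta i) + pl_slope eta U i * t"
        if "t \<in> {eta i..eta (Suc i)}" for t
        using pl_interp_cell[OF part \<open>i \<le> l\<close> that] by (simp add: algebra_simps)
    qed (rule continuous_on_pl_interp)
    then obtain d0 d1 d2
      where W: "\<forall>t\<in>{eta i..eta (Suc i)}. integral {0..t} (pl_interp l eta U) = d0 + d1 * t + d2 * t ^ 2"
      by blast
    show ?thesis
    proof (intro exI ballI)
      fix t assume "t \<in> {eta i..eta (Suc i)}"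
      then show "v t = (c0 + \<mu> * d0) + (c1 + \<mu> * d1) * t + (c2 + \<mu> * d2) * t ^ 2"
        using u W by (simp add: v_def algebra_simps)
    qed
  qed
  moreover have "v 0 = 0" using u0 by (simp add: v_def)
  ultimately show ?thesis unfolding Vh0_def S2h_def by blast
qed

lemma bilin_a_HT_v: "bilin_a T \<mu> u (HT T v) = (L2_norm 0 T f)\<^sup>2 - \<mu> * integral {0..T} (\<lambda>t. f t * e t)"
proof -
  have "bilin_a T \<mu> u (HT T v) = integral {0..T} (\<lambda>t. (f t)\<^sup>2 - \<mu> * (f t * e t))"
    using bilin_a_HT[OF has_derivative_v continuous_derivative_v] by (simp add: power2_eq_square algebra_simps)
  then show ?thesis
    unfolding L2_norm_power2 using continuous_f continuous_e
    by (simp add: integral_diff integrable_continuous_interval continuous_intros)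
qed

lemma H1semi_v: "H1semi T v = L2_norm 0 T (\<lambda>t. f t - \<mu> * e t)"
  by (rule H1semi_eq_L2_norm[OF has_derivative_v])

lemma ratio_le_L2_norm_f:
  assumes "w \<in> Vh0 T l eta"
  shows "bilin_a T \<mu> u (HT T w) / H1semi T w \<le> L2_norm 0 T f"
proof -
  obtain r where dw: "\<And>t. t \<in> {0..T} \<Longrightarrow> (w has_real_derivative r t) (at t within {0..T})"
    and rc: "continuous_on {0..T} r"
    using assms unfolding Vh0_def S2h_def C1_on_def by blast
  have "bilin_a T \<mu> u (HT T w) = integral {0..T} (\<lambda>t. f t * r t)"
    by (rule bilin_a_HT[OF dw rc])
  moreover have "H1semi T w = L2_norm 0 T r"
    by (rule H1semi_eq_L2_norm[OF dw])
  ultimately have "bilin_a T \<mu> u (HT T w) \<le> L2_norm 0 T f * H1semi T w"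
    using abs_le_D1[OF integral_mult_le_L2_norm[OF continuous_f rc]] by simp
  moreover have "0 \<le> H1semi T w" unfolding H1semi_def using integral_square_nonneg by simp
  ultimately show ?thesis
    using L2_norm_nonneg[of 0 T f] by (cases "H1semi T w = 0") (auto simp: pos_divide_le_eq)
qed

lemma le_Sup_ratios:
  assumes "w \<in> Vh0 T l eta" "\<exists>t\<in>{0..T}. w t \<noteq> 0"
  shows "bilin_a T \<mu> u (HT T w) / H1semi T w \<le> Sup ratios"
  using assms ratio_le_L2_norm_f by (intro cSup_upper bdd_aboveI[of _ "L2_norm 0 T f"]) auto

lemma Sup_ratios_ge: "- L2_norm 0 T f \<le> Sup ratios"
proof -
  have did: "((\<lambda>t. t) has_real_derivative 1) (at t within {0..T})" if "t \<in> {0..T}" for t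
    by (rule DERIV_ident)
  have "C1_on T (\<lambda>t. t)" unfolding C1_on_def using did by (intro exI[of _ "\<lambda>_. 1"]) auto
  moreover have "\<forall>t\<in>S. t = 0 + 1 * t + 0 * t ^ 2" for S :: "real set" by simp
  ultimately have id_in: "(\<lambda>t. t) \<in> Vh0 T l eta"
    unfolding Vh0_def S2h_def by blast
  have L2_1: "L2_norm 0 T (\<lambda>_. 1) = sqrt T" using T_pos by (simp add: L2_norm_def)
  have "- L2_norm 0 T f * sqrt T \<le> integral {0..T} f"
    using integral_mult_le_L2_norm[OF continuous_f continuous_on_const[of _ 1]] L2_1
    by (simp add: abs_le_iff)
  moreover have "bilin_a T \<mu> u (HT T (\<lambda>t. t)) = integral {0..T} f"
    using bilin_a_HT[OF did continuous_on_const] by simp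
  moreover have "H1semi T (\<lambda>t. t) = sqrt T"
    using H1semi_eq_L2_norm[OF did] L2_1 by simp
  ultimately have "- L2_norm 0 T f \<le> bilin_a T \<mu> u (HT T (\<lambda>t. t)) / H1semi T (\<lambda>t. t)"
    using T_pos by (simp add: le_divide_eq)
  also have "\<dots> \<le> Sup ratios"
    using id_in T_pos by (intro le_Sup_ratios) (auto intro!: bexI[of _ T])
  finally show ?thesis .
qed

lemma ratio_v_ge:
  assumes X: "0 < L2_norm 0 T f" and "k < 1" and k: "\<mu> * L2_norm 0 T e \<le> k * L2_norm 0 T f"
  shows "L2_norm 0 T f * (1 - k) / (1 + k) \<le> bilin_a T \<mu> u (HT T v) / H1semi T v"
    and "\<exists>t\<in>{0..T}. v t \<noteq> 0"
proof -
  let ?X = "L2_norm 0 T f"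
  define c N where "c = \<mu> * integral {0..T} (\<lambda>t. f t * e t)" and "N = H1semi T v"
  have "integral {0..T} (\<lambda>t. f t * e t) \<le> ?X * L2_norm 0 T e"
    using integral_mult_le_L2_norm[OF continuous_f continuous_e] by (rule abs_le_D1)
  then have c: "c \<le> ?X * (\<mu> * L2_norm 0 T e)"
    unfolding c_def using mult_left_mono[of _ _ \<mu>] \<mu>_pos by (simp add: mult.left_commute)
  have "continuous_on {0..T} (\<lambda>t. \<mu> * e t)"
    using continuous_e by (intro continuous_intros)
  from L2_norm_diff_le[OF continuous_f this]
  have N: "N \<le> ?X + \<mu> * L2_norm 0 T e"
    unfolding N_def H1semi_v using \<mu>_pos by (simp add: L2_norm_cmult)
  have "0 < ?X\<^sup>2 * (1 - k)" using X \<open>k < 1\<close> by simp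
  also have "?X\<^sup>2 * (1 - k) \<le> ?X\<^sup>2 - c"
  proof -
    have "c \<le> ?X * (k * ?X)" using c mult_left_mono[OF k, of ?X] X by linarith
    then show ?thesis by (simp add: power2_eq_square algebra_simps)
  qed
  also have "?X\<^sup>2 - c = integral {0..T} (\<lambda>t. f t * (f t - \<mu> * e t))"
    unfolding c_def bilin_a_HT_v[symmetric] by (rule bilin_a_HT[OF has_derivative_v continuous_derivative_v])
  also have "\<dots> \<le> ?X * N"
    unfolding N_def H1semi_v
    using integral_mult_le_L2_norm[OF continuous_f continuous_derivative_v] by (rule abs_le_D1)
  finally have "0 < N" using X by (simp add: zero_less_mult_iff)
  show "?X * (1 - k) / (1 + k) \<le> bilin_a T \<mu> u (HT T v) / H1semi T v"
    unfolding bilin_a_HT_v N_def[symmetric] using X \<open>k < 1\<close> k c \<open>0 < N\<close> N unfolding c_def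
    by (rule ratio_lower_bound)
  show "\<exists>t\<in>{0..T}. v t \<noteq> 0"
    using H1semi_eq_0_if_vanishing[of T v] \<open>0 < N\<close> unfolding N_def by auto
qed

lemma lower_bound_by_Sup_ratios:
  assumes mesh: "mesh l eta \<le> pi\<^sup>2 / (sqrt 2 * (2 + sqrt \<mu> * T) * \<mu> * T)"
  shows "2 * pi\<^sup>2 / ((2 + sqrt \<mu> * T)\<^sup>2 * (pi\<^sup>2 + 4 * \<mu> * T\<^sup>2)) * H1semi T u \<le> Sup ratios"
proof -
  define C k X where "C = 2 * pi\<^sup>2 / ((2 + sqrt \<mu> * T)\<^sup>2 * (pi\<^sup>2 + 4 * \<mu> * T\<^sup>2))"
    and "k = \<mu> * mesh l eta * T / sqrt 12" and "X = L2_norm 0 T f"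
  have stability: "C * (1 + sqrt \<mu> * T / sqrt 2) \<le> (1 - k) / (1 + k)"
    unfolding C_def k_def
    using stability_constant_le_mesh[OF T_pos \<mu>_pos mesh_nonneg[OF part] mesh_le_length[OF part] mesh] .
  have "0 \<le> k" "0 \<le> X"
    unfolding k_def X_def using mesh_nonneg[OF part] T_pos \<mu>_pos L2_norm_nonneg by auto
  have "0 < 2 + sqrt \<mu> * T" using T_pos \<mu>_pos by (simp add: add_pos_nonneg)
  then have "0 < C" unfolding C_def using T_pos \<mu>_pos by (intro divide_pos_pos mult_pos_pos add_pos_pos) auto
  have "C * H1semi T u \<le> C * ((1 + sqrt \<mu> * T / sqrt 2) * X)"
    using H1semi_u_le \<open>0 < C\<close> unfolding X_def by simp
  also have "\<dots> \<le> X * (1 - k) / (1 + k)"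
    using mult_right_mono[OF stability \<open>0 \<le> X\<close>] by (simp add: mult_ac)
  also have "\<dots> \<le> Sup ratios"
  proof (cases "X = 0")
    case True
    then show ?thesis using Sup_ratios_ge unfolding X_def by simp
  next
    case False
    with \<open>0 \<le> X\<close> have "0 < X" by simp
    have "0 < C * (1 + sqrt \<mu> * T / sqrt 2)"
      using \<open>0 < C\<close> T_pos \<mu>_pos by (intro mult_pos_pos add_pos_nonneg) auto
    then have "k < 1" using stability \<open>0 \<le> k\<close> by (smt (verit) divide_nonpos_pos)
    moreover have "\<mu> * L2_norm 0 T e \<le> k * X"
      using L2_norm_e_le unfolding k_def X_def by simp
    ultimately show ?thesis
      using ratio_v_ge[of k] le_Sup_ratios[OF v_in_Vh0] \<open>0 < X\<close> unfolding X_def by fastforce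
  qed
  finally show ?thesis by (simp only: C_def)
qed

end

theorem mainTheorem5:
  fixes T \<mu> :: real and l :: nat and eta :: "nat \<Rightarrow> real" and u :: "real \<Rightarrow> real"
  assumes "T > 0" and "\<mu> > 0"
    and "is_partition T l eta"
    and "mesh l eta \<le> pi\<^sup>2 / (sqrt 2 * (2 + sqrt \<mu> * T) * \<mu> * T)"
    and "u \<in> Vh0 T l eta"
  shows "2 * pi\<^sup>2 / ((2 + sqrt \<mu> * T)\<^sup>2 * (pi\<^sup>2 + 4 * \<mu> * T\<^sup>2)) * H1semi T u
         \<le> Sup {bilin_a T \<mu> u (HT T v) / H1semi T v | v. v \<in> Vh0 T l eta \<and> (\<exists>t\<in>{0..T}. v t \<noteq> 0)}"
proof -
  obtain p where "\<forall>t\<in>{0..T}. (u has_real_derivative p t) (at t within {0..T})"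
    and "continuous_on {0..T} p"
    using assms(5) unfolding Vh0_def S2h_def C1_on_def by blast
  then interpret Vh0_function T \<mu> l eta u p
    using assms unfolding Vh0_def S2h_def by unfold_locales auto
  show ?thesis using lower_bound_by_Sup_ratios[OF assms(4)] .
qed

end
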